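(* Every tiling system is sofic; that is, for every finite collection $\mathcal P$ of prototiles, $\sigma:T(\mathcal P)\to T(\mathcal P)$ is a sofic system.
   Context: A prototile is a finite nonempty subset of $\mathbb Z$ with minimum $0$. For a finite collection $\mathcal P=\{P_1,\dots,P_K\}$ of prototiles, a tiling of $\mathbb Z$ by $\mathcal P$ is an expression $\mathbb Z=\bigcup_j(t_j+P_{k_j})$ as a disjoint union of translates of prototiles; it corresponds to the point $x\in\{1,\dots,K\}^{\mathbb Z}$ with $x_i=k$ iff $i\in t_j+P_{k_j}$ for some $j$ with $k_j=k$. $T(\mathcal P)$ is the set of all such points and $\sigma$ is the shift $(\sigma x)_i=x_{i+1}$; $\sigma:T(\mathcal P)\to T(\mathcal P)$ is called a tiling system. *)

theory Defs
  imports Main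
begin

definition prototile :: "int set \<Rightarrow> bool" where
  "prototile P \<longleftrightarrow> finite P \<and> P \<noteq> {} \<and> Min P = 0"

text \<open>A tiling is a set J of
  pairs (t,k) (translate t of prototile number k) such that every integer lies in
  exactly one of the tiles t + Ps k; the associated point x labels i by k.\<close>
definition tilings :: "nat \<Rightarrow> (nat \<Rightarrow> int set) \<Rightarrow> (int \<Rightarrow> nat) set" where
  "tilings K Ps = {x. \<exists>J :: (int \<times> nat) set.
      (\<forall>p\<in>J. snd p \<in> {1..K}) \<and>
      (\<forall>i. \<exists>!p. p \<in> J \<and> i \<in> (\<lambda>s. fst p + s) ` Ps (snd p)) \<and>
      (\<forall>i. \<forall>p\<in>J. i \<in> (\<lambda>s. fst p + s) ` Ps (snd p) \<longrightarrow> x i = snd p)}"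

definition is_SFT :: "(int \<Rightarrow> nat) set \<Rightarrow> bool" where
  "is_SFT Y \<longleftrightarrow> (\<exists>B N W. finite B \<and> N \<ge> 1 \<and> W \<subseteq> lists B \<and>
      Y = {y. \<forall>i. map (\<lambda>j. y (i + int j)) [0..<N] \<in> W})"

definition block_code :: "nat \<Rightarrow> ('b list \<Rightarrow> 'a) \<Rightarrow> (int \<Rightarrow> 'b) \<Rightarrow> (int \<Rightarrow> 'a)" where
  "block_code m phi y = (\<lambda>i. phi (map (\<lambda>j. y (i - int m + int j)) [0..<2*m+1]))"

definition sofic :: "(int \<Rightarrow> 'a) set \<Rightarrow> bool" where
  "sofic X \<longleftrightarrow> (\<exists>Y m (phi :: nat list \<Rightarrow> 'a). is_SFT Y \<and> X = block_code m phi ` Y)"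

end

theory Submission
  imports Defs "HOL-Library.Nat_Bijection" "HOL-Library.Infinite_Set"
begin

text \<open>Enrich every symbol k of a tiling point by the position s that the cell occupies
  inside its tile.  Consistency of the enriched labels (if cell i carries (k, s), then
  cell i - s + s' carries (k, s') for every s' in tile k) is a condition on a window of
  radius twice the largest tile entry, so the enriched points form a shift of finite type.
  They correspond exactly to the tilings, and forgetting s is a 1-block code onto the
  tiling system.\<close>

definition centered_window :: "(int \<Rightarrow> 'a) \<Rightarrow> int \<Rightarrow> nat \<Rightarrow> 'a list" where
  "centered_window y i r = map (\<lambda>j. y (i - int r + int j)) [0..<2 * r + 1]"

lemma nth_centered_window:
  assumes "\<bar>d\<bar> \<le> int r"
  shows "centered_window y i r ! nat (int r + d) = y (i + d)"
proof -
  have "nat (int r + d) < 2 * r + 1" "int (nat (int r + d)) = int r + d"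
    using assms by linarith+
  then show ?thesis
    by (simp add: centered_window_def del: upt_Suc)
qed

lemma length_centered_window [simp]: "length (centered_window y i r) = 2 * r + 1"
  by (simp add: centered_window_def)

lemma block_code_radius_0: "block_code 0 phi y i = phi [y i]"
  by (simp add: block_code_def)

lemma is_SFT_centered_window_condition:
  fixes B :: "nat set"
  assumes "finite B"
  shows "is_SFT {y. \<forall>i. y i \<in> B \<and> Q (centered_window y i r)}"
proof -
  define W where "W = {w \<in> lists B. length w = 2 * r + 1 \<and> Q w}"
  have window_shift: "map (\<lambda>j. y (i + int j)) [0..<2 * r + 1] = centered_window y (i + int r) r"
    for y :: "int \<Rightarrow> nat" and i
    by (simp add: centered_window_def)
  have windows_iff: "(\<forall>i. map (\<lambda>j. y (i + int j)) [0..<2 * r + 1] \<in> W) \<longleftrightarrow>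
        (\<forall>i. y i \<in> B \<and> Q (centered_window y i r))" for y
  proof
    assume windows: "\<forall>i. map (\<lambda>j. y (i + int j)) [0..<2 * r + 1] \<in> W"
    show "\<forall>i. y i \<in> B \<and> Q (centered_window y i r)"
    proof
      fix i
      have "centered_window y i r \<in> W"
        using windows[rule_format, of "i - int r"] unfolding window_shift by simp
      moreover have "centered_window y i r ! r = y i"
        using nth_centered_window[of 0 r y i] by simp
      moreover have "r < length (centered_window y i r)"
        by simp
      ultimately show "y i \<in> B \<and> Q (centered_window y i r)"
        unfolding W_def by (metis (mono_tags, lifting) in_listsD mem_Collect_eq nth_mem)
    qed
  next
    assume centered: "\<forall>i. y i \<in> B \<and> Q (centered_window y i r)"
    show "\<forall>i. map (\<lambda>j. y (i + int j)) [0..<2 * r + 1] \<in> W"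
    proof
      fix i
      have "set (centered_window y (i + int r) r) \<subseteq> B"
        using centered by (auto simp: centered_window_def)
      moreover have "Q (centered_window y (i + int r) r)"
        using centered by blast
      ultimately show "map (\<lambda>j. y (i + int j)) [0..<2 * r + 1] \<in> W"
        unfolding W_def window_shift in_lists_conv_set by auto
    qed
  qed
  have "{y. \<forall>i. y i \<in> B \<and> Q (centered_window y i r)} =
        {y. \<forall>i. map (\<lambda>j. y (i + int j)) [0..<2 * r + 1] \<in> W}"
    by (intro Collect_cong windows_iff[symmetric])
  moreover have "W \<subseteq> lists B"
    by (auto simp: W_def)
  ultimately show ?thesis
    unfolding is_SFT_def using assms
    by (intro exI[of _ B] exI[of _ "2 * r + 1"] exI[of _ W]) simp
qed

text \<open>The alphabet of a shift of finite type is nat here, so the enriched symbol (k, s)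
  is coded as a natural number.\<close>

definition tile_label :: "nat \<Rightarrow> int \<Rightarrow> nat" where
  "tile_label k s = prod_encode (k, int_encode s)"

lemma tile_label_eq_iff: "tile_label k s = tile_label k' s' \<longleftrightarrow> k = k' \<and> s = s'"
  by (auto simp: tile_label_def int_encode_eq)

definition tile_labels :: "nat \<Rightarrow> (nat \<Rightarrow> int set) \<Rightarrow> nat set" where
  "tile_labels K Ps = (\<lambda>(k, s). tile_label k s) ` Sigma {1..K} Ps"

lemma tile_labels_iff: "n \<in> tile_labels K Ps \<longleftrightarrow> (\<exists>k\<in>{1..K}. \<exists>s\<in>Ps k. n = tile_label k s)"
  by (auto simp: tile_labels_def)

definition tile_labelling :: "nat \<Rightarrow> (nat \<Rightarrow> int set) \<Rightarrow> (int \<Rightarrow> nat) \<Rightarrow> bool" where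
  "tile_labelling K Ps y \<longleftrightarrow> (\<forall>i. y i \<in> tile_labels K Ps) \<and>
     (\<forall>i. \<forall>k\<in>{1..K}. \<forall>s\<in>Ps k. y i = tile_label k s \<longrightarrow>
        (\<forall>s'\<in>Ps k. y (i - s + s') = tile_label k s'))"

definition forget_position :: "nat list \<Rightarrow> nat" where
  "forget_position w = fst (prod_decode (hd w))"

lemma forget_position_tile_label [simp]: "forget_position (tile_label k s # w) = k"
  by (simp add: forget_position_def tile_label_def)

lemma tiling_of_tile_labelling:
  assumes y: "tile_labelling K Ps y"
  shows "block_code 0 forget_position y \<in> tilings K Ps"
proof -
  define J where "J = {(i - s, k) | i k s. k \<in> {1..K} \<and> s \<in> Ps k \<and> y i = tile_label k s}"
  have label_in_tile: "y i = tile_label (snd p) (i - fst p)"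
    if p_in: "p \<in> J" and i_in: "i \<in> (\<lambda>s. fst p + s) ` Ps (snd p)" for p i
  proof -
    obtain j k s where p: "p = (j - s, k)" "k \<in> {1..K}" "s \<in> Ps k" "y j = tile_label k s"
      using p_in unfolding J_def by blast
    then obtain s' where "s' \<in> Ps k" "i = j - s + s'"
      using i_in by auto
    then show ?thesis
      using y p unfolding tile_labelling_def by auto
  qed
  have "\<exists>!p. p \<in> J \<and> i \<in> (\<lambda>s. fst p + s) ` Ps (snd p)" for i
  proof -
    obtain k s where ks: "k \<in> {1..K}" "s \<in> Ps k" "y i = tile_label k s"
      using y unfolding tile_labelling_def tile_labels_iff by blast
    show ?thesis
    proof (rule ex1I)
      show "(i - s, k) \<in> J \<and> i \<in> (\<lambda>t. fst (i - s, k) + t) ` Ps (snd (i - s, k))"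
        using ks unfolding J_def by force
    next
      fix q assume "q \<in> J \<and> i \<in> (\<lambda>t. fst q + t) ` Ps (snd q)"
      then have "tile_label k s = tile_label (snd q) (i - fst q)"
        using label_in_tile ks(3) by metis
      then show "q = (i - s, k)"
        by (cases q) (auto simp: tile_label_eq_iff)
    qed
  qed
  moreover have "\<forall>p\<in>J. snd p \<in> {1..K}"
    unfolding J_def by auto
  moreover have "\<forall>i. \<forall>p\<in>J. i \<in> (\<lambda>s. fst p + s) ` Ps (snd p) \<longrightarrow>
                   block_code 0 forget_position y i = snd p"
    using label_in_tile by (simp add: block_code_radius_0)
  ultimately show ?thesis
    unfolding tilings_def by blast
qed

lemma tile_labelling_of_tiling:
  assumes "x \<in> tilings K Ps"
  obtains y where "tile_labelling K Ps y" and "x = block_code 0 forget_position y"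
proof -
  obtain J :: "(int \<times> nat) set" where
    J_index: "\<forall>p\<in>J. snd p \<in> {1..K}" and
    J_cover: "\<forall>i. \<exists>!p. p \<in> J \<and> i \<in> (\<lambda>s. fst p + s) ` Ps (snd p)" and
    J_label: "\<forall>i. \<forall>p\<in>J. i \<in> (\<lambda>s. fst p + s) ` Ps (snd p) \<longrightarrow> x i = snd p"
    using assms unfolding tilings_def by blast
  define tile where "tile i = (THE p. p \<in> J \<and> i \<in> (\<lambda>s. fst p + s) ` Ps (snd p))" for i
  have tile: "tile i \<in> J" "i - fst (tile i) \<in> Ps (snd (tile i))" for i
  proof -
    have "tile i \<in> J \<and> i \<in> (\<lambda>s. fst (tile i) + s) ` Ps (snd (tile i))"
      unfolding tile_def by (rule theI'[OF J_cover[rule_format, of i]])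
    then obtain s where "tile i \<in> J" "s \<in> Ps (snd (tile i))" "i = fst (tile i) + s"
      by blast
    moreover from \<open>i = fst (tile i) + s\<close> have "i - fst (tile i) = s"
      by linarith
    ultimately show "tile i \<in> J" "i - fst (tile i) \<in> Ps (snd (tile i))"
      by simp_all
  qed
  have tile_unique: "tile i = p" if "p \<in> J" "i \<in> (\<lambda>s. fst p + s) ` Ps (snd p)" for i p
    unfolding tile_def using the1_equality[OF J_cover[rule_format, of i]] that by blast
  define y where "y i = tile_label (snd (tile i)) (i - fst (tile i))" for i
  have "y i \<in> tile_labels K Ps" for i
    using tile[of i] J_index unfolding y_def tile_labels_iff by blast
  moreover have "y (i - s + s') = tile_label k s'"
    if "k \<in> {1..K}" "s \<in> Ps k" "y i = tile_label k s" "s' \<in> Ps k" for i k s s'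
  proof -
    have k: "snd (tile i) = k" and s: "i - fst (tile i) = s"
      using that(3) by (auto simp: y_def tile_label_eq_iff)
    have offset: "i - s + s' = fst (tile i) + s'"
      using s by linarith
    then have "i - s + s' \<in> (\<lambda>t. fst (tile i) + t) ` Ps (snd (tile i))"
      using k \<open>s' \<in> Ps k\<close> by simp
    then have "tile (i - s + s') = tile i"
      by (rule tile_unique[OF tile(1)])
    then show ?thesis
      using k offset by (simp add: y_def)
  qed
  ultimately have "tile_labelling K Ps y"
    unfolding tile_labelling_def by blast
  moreover have "x = block_code 0 forget_position y"
  proof
    fix i
    have "i \<in> (\<lambda>s. fst (tile i) + s) ` Ps (snd (tile i))"
      using tile(2)[of i] by (rule rev_image_eqI) simp
    then have "x i = snd (tile i)"
      using J_label tile(1)[of i] by blast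
    then show "x i = block_code 0 forget_position y i"
      by (simp add: block_code_radius_0 y_def)
  qed
  ultimately show thesis
    using that by blast
qed

lemma tilings_eq_image_tile_labellings:
  "tilings K Ps = block_code 0 forget_position ` {y. tile_labelling K Ps y}"
  using tiling_of_tile_labelling tile_labelling_of_tiling by blast

definition consistent_window :: "nat \<Rightarrow> (nat \<Rightarrow> int set) \<Rightarrow> nat \<Rightarrow> nat list \<Rightarrow> bool" where
  "consistent_window K Ps r w \<longleftrightarrow>
     (\<forall>k\<in>{1..K}. \<forall>s\<in>Ps k. w ! r = tile_label k s \<longrightarrow>
        (\<forall>s'\<in>Ps k. w ! nat (int r + (s' - s)) = tile_label k s'))"

lemma tile_labelling_iff_consistent_windows:
  assumes bound: "\<forall>k\<in>{1..K}. \<forall>s\<in>Ps k. \<bar>s\<bar> \<le> int D"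
  shows "tile_labelling K Ps y \<longleftrightarrow>
    (\<forall>i. y i \<in> tile_labels K Ps \<and> consistent_window K Ps (2 * D) (centered_window y i (2 * D)))"
proof -
  have "centered_window y i (2 * D) ! nat (int (2 * D) + (s' - s)) = y (i - s + s')"
    if "k \<in> {1..K}" "s \<in> Ps k" "s' \<in> Ps k" for i k s s'
  proof -
    have "\<bar>s\<bar> \<le> int D" "\<bar>s'\<bar> \<le> int D"
      using bound that by auto
    then have "\<bar>s' - s\<bar> \<le> int (2 * D)"
      by linarith
    then show ?thesis
      using nth_centered_window by (metis add_diff_eq diff_add_eq)
  qed
  moreover have "centered_window y i (2 * D) ! (2 * D) = y i" for i
    using nth_centered_window[of 0 "2 * D" y i] by (simp add: nat_mult_distrib)
  ultimately show ?thesis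
    unfolding tile_labelling_def consistent_window_def by auto
qed

lemma is_SFT_tile_labellings:
  assumes "\<forall>k\<in>{1..K}. \<forall>s\<in>Ps k. \<bar>s\<bar> \<le> int D"
  shows "is_SFT {y. tile_labelling K Ps y}"
proof -
  have "finite (Sigma {1..K} Ps)"
    by (rule finite_subset[of _ "{1..K} \<times> {- int D..int D}"]) (use assms in fastforce)+
  then have "finite (tile_labels K Ps)"
    by (simp add: tile_labels_def)
  then show ?thesis
    unfolding tile_labelling_iff_consistent_windows[OF assms]
    by (rule is_SFT_centered_window_condition)
qed

theorem mainTheorem4:
  fixes K :: nat and Ps :: "nat \<Rightarrow> int set"
  assumes "\<forall>k\<in>{1..K}. prototile (Ps k)"
    and "inj_on Ps {1..K}"
  shows "sofic (tilings K Ps)"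
proof -
  have "finite (\<Union>k\<in>{1..K}. Ps k)"
    using assms(1) by (auto simp: prototile_def)
  then obtain b where "abs ` (\<Union>k\<in>{1..K}. Ps k) \<subseteq> {..b}"
    using finite_int_iff_bounded_le by blast
  then have "\<forall>k\<in>{1..K}. \<forall>s\<in>Ps k. \<bar>s\<bar> \<le> int (nat b)"
    by fastforce
  then have "is_SFT {y. tile_labelling K Ps y}"
    by (rule is_SFT_tile_labellings)
  then show ?thesis
    unfolding sofic_def tilings_eq_image_tile_labellings by blast
qed

end
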